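(* Let $0\le k\le n$ and $\sigma\in\mathcal D^S_k$. Then $$\sum_{\pi\in S_n,\ dp(\pi)=\sigma}(-1)^{\mathrm{inv}(\pi)}q^{\mathrm{maj}(\pi)}=(-1)^{\mathrm{inv}(\sigma)}q^{\mathrm{maj}(\sigma)}{n\brack k}_q.$$
   Context: $S_n$ is the symmetric group on $[n]$; $\mathcal D^S_k$ is the set of derangements in $S_k$ ($\sigma_i\ne i$ for all $i$), with $\mathcal D^S_0$ consisting of the empty word. $\mathrm{inv}(\sigma)=\#\{(i,j):i<j,\sigma_i>\sigma_j\}$, $\mathrm{maj}(\sigma)=\sum_{i:\sigma_i>\sigma_{i+1}}i$. For a word $w$ of distinct positive integers $a_1<\dots<a_m$, its reduction is obtained by replacing each $a_j$ by $j$. For $\pi\in S_n$, the derangement part $dp(\pi)$ is the reduction of the subword of $\pi$ consisting of the letters $\pi_i$ with $\pi_i\neq i$. $[m]_q=1+q+\dots+q^{m-1}$, $[m]_q!=[1]_q\cdots[m]_q$, $[0]_q!=1$, ${n\brack k}_q=\frac{[n]_q!}{[k]_q![n-k]_q!}$. *)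

theory Defs
  imports "HOL-Computational_Algebra.Polynomial"
begin

text \<open>Permutations of [n] in one-line notation, as lists (entry at 0-based index i is sigma_(i+1)).\<close>
definition perms :: "nat \<Rightarrow> nat list set" where
  "perms n = {xs. length xs = n \<and> set xs = {1..n}}"

definition derangements :: "nat \<Rightarrow> nat list set" where
  "derangements k = {s \<in> perms k. \<forall>i<k. s ! i \<noteq> Suc i}"

definition inversions :: "nat list \<Rightarrow> nat" where
  "inversions xs = card {(i, j). i < j \<and> j < length xs \<and> xs ! i > xs ! j}"

definition maj :: "nat list \<Rightarrow> nat" where
  "maj xs = (\<Sum>i \<in> {i. Suc i < length xs \<and> xs ! i > xs ! Suc i}. Suc i)"

definition reduction :: "nat list \<Rightarrow> nat list" where
  "reduction w = map (\<lambda>x. card {y \<in> set w. y \<le> x}) w"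

definition dp :: "nat list \<Rightarrow> nat list" where
  "dp p = reduction [p ! i. i \<leftarrow> [0..<length p], p ! i \<noteq> Suc i]"

definition qvar :: "int poly" where
  "qvar = monom 1 1"

definition qint :: "nat \<Rightarrow> int poly" where
  "qint m = (\<Sum>i<m. qvar ^ i)"

definition qfact :: "nat \<Rightarrow> int poly" where
  "qfact m = (\<Prod>i\<in>{1..m}. qint i)"

definition qbinom :: "nat \<Rightarrow> nat \<Rightarrow> int poly" where
  "qbinom n k = qfact n div (qfact k * qfact (n - k))"

end

theory Submission
  imports Defs
begin

text \<open>Every \<pi> of length N + 1 with dp \<pi> = \<sigma> arises exactly once from a pair (\<tau>, p), where
  dp \<tau> = \<sigma>, length \<tau> = N and 1 \<le> p \<le> N + 1, by inserting the letter p at position p as a new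
  fixed point and raising the letters \<ge> p by one. The insertion changes inv by an even number,
  and, as p runs over 1..N+1, the increase of maj plus the number of fixed points of \<tau> at
  positions \<ge> p takes every value 0..N exactly once. Weighting each fixed point f of \<pi> by
  q^(number of fixed points of \<pi> beyond f) and summing over all pairs (\<pi>, f) in two ways
  gives [N + 1 - k]_q A(N + 1) = [N + 1]_q A(N) for the signed sum A(n) over the fibre of
  length n. Since A(k) is the weight of \<sigma> alone, A(n) is that weight times the q-binomial
  coefficient.\<close>

lemma sum_card_greater_eq_sum_lessThan:
  fixes h :: "nat \<Rightarrow> 'b::comm_monoid_add" and F :: "'a::linorder set"
  assumes "finite F"
  shows "(\<Sum>f\<in>F. h (card {g\<in>F. f < g})) = (\<Sum>i<card F. h i)"
  using assms
proof (induction F rule: finite_linorder_min_induct)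
  case empty then show ?case by simp
next
  case (insert b A)
  have b: "b \<notin> A" "{g \<in> insert b A. b < g} = A" using insert.hyps by auto
  have "(\<Sum>f\<in>A. h (card {g\<in>insert b A. f < g})) = (\<Sum>f\<in>A. h (card {g\<in>A. f < g}))"
    using insert.hyps by (intro sum.cong arg_cong[where f = "\<lambda>S. h (card S)"]) auto
  then show ?case using insert b by (simp add: lessThan_Suc add.commute)
qed

lemma sum_card_less_eq_sum_lessThan:
  fixes h :: "nat \<Rightarrow> 'b::comm_monoid_add" and F :: "'a::linorder set"
  assumes "finite F"
  shows "(\<Sum>f\<in>F. h (card {g\<in>F. g < f})) = (\<Sum>i<card F. h i)"
  using assms
proof (induction F rule: finite_linorder_max_induct)
  case empty then show ?case by simp
next
  case (insert b A)
  have b: "b \<notin> A" "{g \<in> insert b A. g < b} = A" using insert.hyps by auto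
  have "(\<Sum>f\<in>A. h (card {g\<in>insert b A. g < f})) = (\<Sum>f\<in>A. h (card {g\<in>A. g < f}))"
    using insert.hyps by (intro sum.cong arg_cong[where f = "\<lambda>S. h (card S)"]) auto
  then show ?case using insert b by (simp add: lessThan_Suc add.commute)
qed

lemma sum_power_lessThan_add:
  fixes q :: "'a::comm_semiring_1"
  shows "(\<Sum>i<a + b. q ^ i) = (\<Sum>i<a. q ^ i) + q ^ a * (\<Sum>i<b. q ^ i)"
  by (induction b) (simp_all add: algebra_simps power_add)

lemma sum_atMost_split:
  fixes f :: "nat \<Rightarrow> 'a::comm_monoid_add"
  assumes "m \<le> n"
  shows "(\<Sum>i\<le>n. f i) = (\<Sum>i<m. f i) + f m + (\<Sum>i\<in>{Suc m..n}. f i)"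
proof -
  have "{..n} = {..<m} \<union> {m..n}" using assms by auto
  then have "(\<Sum>i\<le>n. f i) = (\<Sum>i<m. f i) + (\<Sum>i\<in>{m..n}. f i)"
    by (simp add: sum.union_disjoint ivl_disj_int_one(4))
  then show ?thesis using assms by (simp add: sum.atLeast_Suc_atMost add.assoc)
qed

lemma card_atLeast_Suc:
  assumes "finite {i. Q i}"
  shows "card {i. p \<le> i \<and> Q i} = card {i. Suc p \<le> i \<and> Q i} + (if Q p then 1 else 0)"
proof -
  have "{i. p \<le> i \<and> Q i} = (if Q p then insert p {i. Suc p \<le> i \<and> Q i} else {i. Suc p \<le> i \<and> Q i})"
    by (auto simp: le_eq_less_or_eq)
  then show ?thesis using assms by (simp add: finite_subset[OF _ assms])
qed

lemma card_less_add_card_greater: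
  fixes B :: "'a::linorder set"
  assumes "finite B" "p \<notin> B"
  shows "card B = card {g \<in> B. g < p} + card {g \<in> B. p < g}"
proof -
  have "B = {g \<in> B. g < p} \<union> {g \<in> B. p < g}"
    using assms(2) by (auto dest: not_less_iff_gr_or_eq[THEN iffD1])
  then show ?thesis
    using assms(1) by (metis (no_types, lifting) card_Un_disjoint disjoint_iff finite_Un less_asym mem_Collect_eq)
qed

text \<open>The exponents take each value in 0..M-1 once: a slot p without L gets the number of such
  slots after it, a slot with L gets M minus the number of L-slots from p on.\<close>
lemma sum_power_slots:
  fixes q :: "'a::comm_semiring_1" and L :: "nat \<Rightarrow> bool"
  assumes r: "\<And>p. p \<in> {1..M} \<Longrightarrow> r p = card {x \<in> {p<..M}. \<not> L x}"
  shows "(\<Sum>p\<in>{1..M}. q ^ (r p + (if L p then p - 1 else 0))) = (\<Sum>i<M. q ^ i)"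
proof -
  define A where "A = {p \<in> {1..M}. L p}"
  define B where "B = {p \<in> {1..M}. \<not> L p}"
  have fin: "finite A" "finite B" and AB: "A \<inter> B = {}" "A \<union> B = {1..M}"
    by (auto simp: A_def B_def)
  have rB: "r p = card {g \<in> B. p < g}" if "p \<in> {1..M}" for p
    unfolding r[OF that] B_def by (rule arg_cong[where f = card]) auto
  have sum_B: "(\<Sum>p\<in>B. q ^ (r p + (if L p then p - 1 else 0))) = (\<Sum>i<card B. q ^ i)"
  proof -
    have "(\<Sum>p\<in>B. q ^ (r p + (if L p then p - 1 else 0))) = (\<Sum>p\<in>B. q ^ card {g \<in> B. p < g})"
      using rB by (intro sum.cong) (auto simp: B_def)
    then show ?thesis using sum_card_greater_eq_sum_lessThan[OF fin(2)] by simp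
  qed
  have exp_A: "r p + (p - 1) = card B + card {g \<in> A. g < p}" if "p \<in> A" for p
  proof -
    have p: "p \<in> {1..M}" "p \<notin> B" using that AB by auto
    have "{g \<in> {1..M}. g < p} = {1..<p}" using p by auto
    then have "p - 1 = card {g \<in> {1..M}. g < p}" by simp
    also have "{g \<in> {1..M}. g < p} = {g \<in> A. g < p} \<union> {g \<in> B. g < p}"
      using AB by blast
    also have "card \<dots> = card {g \<in> A. g < p} + card {g \<in> B. g < p}"
      using AB fin by (intro card_Un_disjoint) auto
    finally have "p - 1 = card {g \<in> A. g < p} + card {g \<in> B. g < p}" .
    moreover have "card B = card {g \<in> B. g < p} + card {g \<in> B. p < g}"
      using card_less_add_card_greater[OF fin(2) p(2)] .
    ultimately show ?thesis using rB[OF p(1)] by simp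
  qed
  have sum_A: "(\<Sum>p\<in>A. q ^ (r p + (if L p then p - 1 else 0))) = q ^ card B * (\<Sum>i<card A. q ^ i)"
  proof -
    have "(\<Sum>p\<in>A. q ^ (r p + (if L p then p - 1 else 0)))
        = (\<Sum>p\<in>A. q ^ card B * q ^ card {g \<in> A. g < p})"
      using exp_A by (intro sum.cong) (auto simp: A_def power_add)
    then show ?thesis using sum_card_less_eq_sum_lessThan[OF fin(1)] by (simp add: sum_distrib_left)
  qed
  have "card B + card A = M" using AB fin by (metis card_Un_disjoint card_atLeastAtMost diff_Suc_1 Un_commute inf_commute)
  then have "(\<Sum>i<M. q ^ i) = (\<Sum>i<card B. q ^ i) + q ^ card B * (\<Sum>i<card A. q ^ i)"
    using sum_power_lessThan_add by metis
  also have "\<dots> = (\<Sum>p\<in>A \<union> B. q ^ (r p + (if L p then p - 1 else 0)))"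
    by (subst sum.union_disjoint[OF fin AB(1)]) (simp add: sum_A sum_B add.commute)
  finally show ?thesis using AB by simp
qed

section \<open>q-integers and q-binomial coefficients\<close>

lemma qint_add: "qint (a + b) = qint a + qvar ^ a * qint b"
  unfolding qint_def by (rule sum_power_lessThan_add)

lemma qint_neq_0: "m \<noteq> 0 \<Longrightarrow> qint m \<noteq> 0"
proof
  assume "m \<noteq> 0" "qint m = 0"
  moreover have "poly (qint m) 1 = of_nat m"
    by (simp add: qint_def qvar_def poly_sum poly_monom)
  ultimately show False by simp
qed

lemma qfact_neq_0: "qfact m \<noteq> 0"
  unfolding qfact_def using qint_neq_0 by (simp add: prod_zero_iff)

lemma qfact_Suc: "qfact (Suc m) = qint (Suc m) * qfact m"
  unfolding qfact_def by (simp add: prod.atLeast1_atMost_eq prod.lessThan_Suc mult.commute)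

text \<open>The q-Pascal recursion, showing that qbinom is an exact quotient.\<close>
fun qpascal :: "nat \<Rightarrow> nat \<Rightarrow> int poly" where
  "qpascal n 0 = 1"
| "qpascal 0 (Suc k) = 0"
| "qpascal (Suc n) (Suc k) = qpascal n k + qvar ^ Suc k * qpascal n (Suc k)"

lemma qpascal_eq_0: "n < k \<Longrightarrow> qpascal n k = 0"
  by (induction n k rule: qpascal.induct) auto

lemma qpascal_diag: "qpascal n n = 1"
  by (induction n) (auto simp: qpascal_eq_0)

lemma qpascal_mult_qfact: "k \<le> n \<Longrightarrow> qpascal n k * qfact k * qfact (n - k) = qfact n"
proof (induction n arbitrary: k)
  case 0 then show ?case by (simp add: qfact_def)
next
  case (Suc n)
  show ?case
  proof (cases k)
    case 0 then show ?thesis by (simp add: qfact_def)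
  next
    case (Suc j)
    show ?thesis
    proof (cases "j = n")
      case True then show ?thesis using Suc by (simp add: qpascal_diag qpascal_eq_0 qfact_def)
    next
      case False
      then have jn: "j < n" using Suc.prems Suc by simp
      have IH1: "qpascal n j * qfact j * qfact (n - j) = qfact n"
        and IH2: "qpascal n (Suc j) * qfact (Suc j) * qfact (n - Suc j) = qfact n"
        using Suc.IH jn by simp_all
      have qfact_diff: "qfact (n - j) = qint (n - j) * qfact (n - Suc j)"
        using jn qfact_Suc[of "n - Suc j"] by (simp add: Suc_diff_Suc)
      have "qpascal (Suc n) k * qfact k * qfact (Suc n - k)
          = qint (Suc j) * (qpascal n j * qfact j * qfact (n - j))
            + qvar ^ Suc j * qint (n - j) * (qpascal n (Suc j) * qfact (Suc j) * qfact (n - Suc j))"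
        using Suc by (simp add: qfact_Suc qfact_diff algebra_simps)
      also have "\<dots> = qfact n * (qint (Suc j) + qvar ^ Suc j * qint (n - j))"
        unfolding IH1 IH2 by (simp add: algebra_simps)
      also have "\<dots> = qfact (Suc n)"
        using qint_add[of "Suc j" "n - j"] jn by (simp add: qfact_Suc mult.commute)
      finally show ?thesis .
    qed
  qed
qed

lemma eq_qbinom_if_mult_qfact:
  assumes "k \<le> n" and "a * qfact k * qfact (n - k) = c * qfact n"
  shows "a = c * qbinom n k"
proof -
  have nz: "qfact k * qfact (n - k) \<noteq> 0" using qfact_neq_0 by simp
  have "qfact n = qpascal n k * (qfact k * qfact (n - k))"
    using qpascal_mult_qfact[OF assms(1)] by (simp add: mult.assoc)
  then have "qbinom n k = qpascal n k" and "a * (qfact k * qfact (n - k)) = c * qpascal n k * (qfact k * qfact (n - k))"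
    using assms(2) nz by (simp_all add: qbinom_def mult.assoc)
  then show ?thesis using nz by simp
qed

section \<open>Inserting a fixed point\<close>

lemma perms_imp_distinct: "xs \<in> perms n \<Longrightarrow> distinct xs"
  by (simp add: perms_def card_distinct)

lemma nth_perms_bounds: "xs \<in> perms n \<Longrightarrow> i < n \<Longrightarrow> 1 \<le> xs ! i \<and> xs ! i \<le> n"
  using nth_mem[of i xs] by (auto simp: perms_def)

lemma nth_perms_eq_iff: "xs \<in> perms n \<Longrightarrow> i < n \<Longrightarrow> j < n \<Longrightarrow> xs ! i = xs ! j \<longleftrightarrow> i = j"
  using perms_imp_distinct by (simp add: perms_def nth_eq_iff_index_eq)

lemma finite_perms: "finite (perms n)"
proof -
  have "perms n \<subseteq> {xs. set xs \<subseteq> {1..n} \<and> length xs = n}" by (auto simp: perms_def)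
  then show ?thesis by (rule finite_subset) (simp add: finite_lists_length_eq)
qed

definition shift_up :: "nat \<Rightarrow> nat \<Rightarrow> nat" where
  "shift_up p x = (if p \<le> x then Suc x else x)"

definition shift_down :: "nat \<Rightarrow> nat \<Rightarrow> nat" where
  "shift_down p x = (if p < x then x - 1 else x)"

lemma shift_up_less_iff [simp]: "shift_up p x < shift_up p y \<longleftrightarrow> x < y"
  by (auto simp: shift_up_def)

lemma shift_up_eq_iff [simp]: "shift_up p x = shift_up p y \<longleftrightarrow> x = y"
  by (auto simp: shift_up_def)

lemma shift_up_neq [simp]: "shift_up p x \<noteq> p"
  by (auto simp: shift_up_def)

lemma shift_down_shift_up [simp]: "shift_down p (shift_up p x) = x"
  by (auto simp: shift_up_def shift_down_def)

lemma shift_down_comp_shift_up [simp]: "shift_down p \<circ> shift_up p = id"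
  by auto

lemma shift_up_shift_down: "x \<noteq> p \<Longrightarrow> shift_up p (shift_down p x) = x"
  by (auto simp: shift_up_def shift_down_def)

lemma insert_shift_up_image_atLeastAtMost:
  assumes "1 \<le> p" "p \<le> Suc N"
  shows "insert p (shift_up p ` {1..N}) = {1..Suc N}"
proof
  show "insert p (shift_up p ` {1..N}) \<subseteq> {1..Suc N}" using assms by (auto simp: shift_up_def)
  show "{1..Suc N} \<subseteq> insert p (shift_up p ` {1..N})"
  proof
    fix x assume x: "x \<in> {1..Suc N}"
    consider "x < p" | "x = p" | "p < x" by linarith
    then show "x \<in> insert p (shift_up p ` {1..N})"
    proof cases
      case 1 then show ?thesis using x assms by (auto simp: shift_up_def image_iff)
    next
      case 3
      then have "x = shift_up p (x - 1)" and "x - 1 \<in> {1..N}" using x assms by (auto simp: shift_up_def)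
      then show ?thesis by blast
    qed simp
  qed
qed

text \<open>Positions and letters count from 1, so the inserted letter p becomes a fixed point.\<close>
definition insert_fixed :: "nat list \<Rightarrow> nat \<Rightarrow> nat list" where
  "insert_fixed t p = map (shift_up p) (take (p - 1) t) @ p # map (shift_up p) (drop (p - 1) t)"

definition delete_fixed :: "nat list \<Rightarrow> nat \<Rightarrow> nat list" where
  "delete_fixed s p = map (shift_down p) (take (p - 1) s @ drop p s)"

lemma length_insert_fixed [simp]: "p \<le> Suc (length t) \<Longrightarrow> length (insert_fixed t p) = Suc (length t)"
  by (simp add: insert_fixed_def)

lemma nth_insert_fixed:
  assumes "1 \<le> p" "p \<le> Suc (length t)" "j < Suc (length t)"
  shows "insert_fixed t p ! j =
    (if Suc j < p then shift_up p (t ! j) else if Suc j = p then p else shift_up p (t ! (j - 1)))"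
  using assms by (auto simp: insert_fixed_def nth_append nth_Cons' min_def)

lemma nth_insert_fixed_fixed: "1 \<le> p \<Longrightarrow> p \<le> Suc (length t) \<Longrightarrow> insert_fixed t p ! (p - 1) = p"
  by (simp add: nth_insert_fixed)

lemma nth_insert_fixed_shift_up:
  "1 \<le> p \<Longrightarrow> p \<le> Suc (length t) \<Longrightarrow> i < length t
    \<Longrightarrow> insert_fixed t p ! shift_up (p - 1) i = shift_up p (t ! i)"
  by (auto simp: nth_insert_fixed shift_up_def)

lemma nth_insert_fixed_Suc:
  assumes "m \<le> length t" "j < Suc (length t)"
  shows "insert_fixed t (Suc m) ! j =
    (if j < m then shift_up (Suc m) (t ! j) else if j = m then Suc m else shift_up (Suc m) (t ! (j - 1)))"
  using assms by (simp add: nth_insert_fixed)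

lemma set_insert_fixed: "set (insert_fixed t p) = insert p (shift_up p ` set t)"
proof -
  have "set (take (p - 1) t) \<union> set (drop (p - 1) t) = set t"
    by (metis append_take_drop_id set_append)
  then show ?thesis by (auto simp: insert_fixed_def)
qed

lemma inj_shift_up: "inj (shift_up p)"
  by (simp add: inj_def)

lemma insert_fixed_in_perms:
  assumes "t \<in> perms N" "1 \<le> p" "p \<le> Suc N"
  shows "insert_fixed t p \<in> perms (Suc N)"
  using assms insert_shift_up_image_atLeastAtMost by (simp add: perms_def set_insert_fixed)

lemma delete_insert_fixed:
  assumes "1 \<le> p" "p \<le> Suc (length t)"
  shows "delete_fixed (insert_fixed t p) p = t"
  using assms by (simp add: delete_fixed_def insert_fixed_def take_append drop_append min_def)

lemma insert_delete_fixed: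
  assumes s: "distinct s" and p: "1 \<le> p" "p \<le> length s" and fixed: "s ! (p - 1) = p"
  shows "insert_fixed (delete_fixed s p) p = s"
proof -
  have s_split: "s = take (p - 1) s @ p # drop p s"
    using id_take_nth_drop[of "p - 1" s] p fixed by simp
  then have "distinct (take (p - 1) s @ p # drop p s)" using s by metis
  then have "map (shift_up p \<circ> shift_down p) (take (p - 1) s) = take (p - 1) s"
    and "map (shift_up p \<circ> shift_down p) (drop p s) = drop p s"
    by (auto intro!: map_idI shift_up_shift_down)
  moreover have "insert_fixed (delete_fixed s p) p
      = map (shift_up p \<circ> shift_down p) (take (p - 1) s) @ p # map (shift_up p \<circ> shift_down p) (drop p s)"
    using p by (simp add: delete_fixed_def insert_fixed_def take_append drop_append min_absorb1)
  ultimately show ?thesis using s_split by simp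
qed

lemma delete_fixed_in_perms:
  assumes s: "s \<in> perms (Suc N)" and p: "1 \<le> p" "p \<le> Suc N" and fixed: "s ! (p - 1) = p"
  shows "delete_fixed s p \<in> perms N"
proof -
  define d where "d = delete_fixed s p"
  have len: "length d = N" using s p by (simp add: d_def delete_fixed_def perms_def)
  have "insert_fixed d p = s"
    using insert_delete_fixed[OF perms_imp_distinct[OF s]] s p fixed by (simp add: d_def perms_def)
  then have "insert p (shift_up p ` set d) = set s"
    using set_insert_fixed by metis
  also have "\<dots> = insert p (shift_up p ` {1..N})"
    using s p insert_shift_up_image_atLeastAtMost by (simp add: perms_def)
  finally have "insert p (shift_up p ` set d) = insert p (shift_up p ` {1..N})" .
  then have "shift_up p ` set d = shift_up p ` {1..N}"
    by (metis Diff_insert_absorb image_iff shift_up_neq)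
  then have "set d = {1..N}" using inj_shift_up by (simp add: inj_image_eq_iff)
  then show ?thesis using len by (simp add: d_def perms_def)
qed

section \<open>The derangement part and fixed points\<close>

lemma dp_eq: "dp s = reduction (map ((!) s) (filter (\<lambda>i. s ! i \<noteq> Suc i) [0..<length s]))"
proof -
  have "concat (map (\<lambda>i. if s ! i \<noteq> Suc i then [s ! i] else []) xs)
      = map ((!) s) (filter (\<lambda>i. s ! i \<noteq> Suc i) xs)" for xs
    by (induction xs) auto
  then show ?thesis by (simp add: dp_def)
qed

lemma reduction_map_strict_mono:
  fixes f :: "nat \<Rightarrow> nat"
  assumes "strict_mono f"
  shows "reduction (map f w) = reduction w"
proof -
  have "card {y \<in> f ` set w. y \<le> f z} = card {y \<in> set w. y \<le> z}" for z
  proof -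
    have "{y \<in> f ` set w. y \<le> f z} = f ` {y \<in> set w. y \<le> z}"
      using assms by (auto simp: strict_mono_less_eq)
    then show ?thesis using strict_mono_imp_inj_on[OF assms] by (simp add: card_image inj_on_subset)
  qed
  then show ?thesis by (simp add: reduction_def)
qed

lemma strict_mono_shift_up: "strict_mono (shift_up p)"
  by (simp add: strict_mono_def)

lemma filter_neq_upt_Suc:
  assumes "m \<le> N"
  shows "filter (\<lambda>j. j \<noteq> m) [0..<Suc N] = map (shift_up m) [0..<N]"
proof -
  have "[0..<Suc N] = [0..<m] @ m # map Suc [m..<N]"
    using upt_add_eq_append[of 0 m "Suc N - m"] assms by (simp add: upt_conv_Cons map_Suc_upt)
  moreover have "map (shift_up m) [0..<N] = [0..<m] @ map Suc [m..<N]"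
  proof -
    have "[0..<N] = [0..<m] @ [m..<N]"
      using upt_add_eq_append[of 0 m "N - m"] assms by simp
    moreover have "map (shift_up m) [0..<m] = [0..<m]"
      by (auto simp: shift_up_def intro: map_idI)
    moreover have "map (shift_up m) [m..<N] = map Suc [m..<N]"
      by (auto simp: shift_up_def)
    ultimately show ?thesis by (simp del: upt_Suc)
  qed
  ultimately show ?thesis by (simp add: filter_id_conv del: upt_Suc)
qed

text \<open>Entry i of t sits at index shift_up (p - 1) i of insert_fixed t p, and it is a fixed
  point there iff it is one in t.\<close>
lemma shift_up_eq_Suc_shift_up_iff: "shift_up (Suc m) x = Suc (shift_up m i) \<longleftrightarrow> x = Suc i"
  by (auto simp: shift_up_def)

lemma dp_insert_fixed:
  assumes p: "1 \<le> p" "p \<le> Suc (length t)"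
  shows "dp (insert_fixed t p) = dp t"
proof -
  define u where "u = insert_fixed t p"
  define m where "m = p - 1"
  have m: "m \<le> length t" "p = Suc m" using p by (auto simp: m_def)
  have u_m: "u ! m = Suc m"
    using nth_insert_fixed_fixed[OF p] p by (simp add: u_def m_def)
  have u_shift: "u ! shift_up m i = shift_up p (t ! i)" if "i < length t" for i
    using nth_insert_fixed_shift_up[OF p that] by (simp add: u_def m_def)
  have "length u = Suc (length t)" using p by (simp add: u_def)
  then have "filter (\<lambda>i. u ! i \<noteq> Suc i) [0..<length u]
      = filter (\<lambda>i. u ! i \<noteq> Suc i) (filter (\<lambda>j. j \<noteq> m) [0..<Suc (length t)])"
    unfolding filter_filter using u_m by (metis (mono_tags, lifting) filter_cong)
  also have "\<dots> = map (shift_up m) (filter (\<lambda>i. u ! shift_up m i \<noteq> Suc (shift_up m i)) [0..<length t])"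
    by (simp only: filter_neq_upt_Suc[OF m(1)] filter_map comp_def)
  also have "\<dots> = map (shift_up m) (filter (\<lambda>i. t ! i \<noteq> Suc i) [0..<length t])"
  proof (intro arg_cong[where f = "map (shift_up m)"] filter_cong[OF refl])
    fix i assume "i \<in> set [0..<length t]"
    then have "u ! shift_up m i = shift_up (Suc m) (t ! i)" using u_shift m(2) by simp
    then show "(u ! shift_up m i \<noteq> Suc (shift_up m i)) = (t ! i \<noteq> Suc i)"
      by (simp add: shift_up_eq_Suc_shift_up_iff)
  qed
  finally have "map ((!) u) (filter (\<lambda>i. u ! i \<noteq> Suc i) [0..<length u])
      = map (shift_up p) (map ((!) t) (filter (\<lambda>i. t ! i \<noteq> Suc i) [0..<length t]))"
    using u_shift by (simp add: comp_def)
  then have "dp u = reduction (map (shift_up p) (map ((!) t) (filter (\<lambda>i. t ! i \<noteq> Suc i) [0..<length t])))"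
    by (simp only: dp_eq)
  then show ?thesis
    by (simp only: u_def reduction_map_strict_mono[OF strict_mono_shift_up] dp_eq)
qed

definition fixed_points :: "nat list \<Rightarrow> nat set" where
  "fixed_points s = {i \<in> {1..length s}. s ! (i - 1) = i}"

lemma finite_fixed_points: "finite (fixed_points s)"
  by (simp add: fixed_points_def)

lemma fixed_points_eq_image: "fixed_points s = Suc ` {i. i < length s \<and> s ! i = Suc i}"
  unfolding fixed_points_def by (force simp: image_iff Suc_le_eq gr0_conv_Suc)

lemma card_fixed_points_add_length_dp: "card (fixed_points s) + length (dp s) = length s"
proof -
  have "length (dp s) = card {i. i < length s \<and> s ! i \<noteq> Suc i}"
    by (simp add: dp_eq reduction_def distinct_card[symmetric])
  moreover have "card (fixed_points s) = card {i. i < length s \<and> s ! i = Suc i}"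
    by (simp add: fixed_points_eq_image card_image)
  moreover have "{..<length s} = {i. i < length s \<and> s ! i = Suc i} \<union> {i. i < length s \<and> s ! i \<noteq> Suc i}"
    by auto
  then have "card {i. i < length s \<and> s ! i = Suc i} + card {i. i < length s \<and> s ! i \<noteq> Suc i}
      = length s"
    by (metis (no_types, lifting) card_Un_disjoint card_lessThan disjoint_iff finite_Un finite_lessThan mem_Collect_eq)
  ultimately show ?thesis by simp
qed

lemma fixed_in_fixed_points_insert_fixed:
  "1 \<le> p \<Longrightarrow> p \<le> Suc (length t) \<Longrightarrow> p \<in> fixed_points (insert_fixed t p)"
  using nth_insert_fixed_fixed[of p t] by (auto simp: fixed_points_def)

lemma fixed_points_insert_fixed_greater:
  assumes p: "1 \<le> p" "p \<le> Suc (length t)"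
  shows "{g \<in> fixed_points (insert_fixed t p). p < g} = Suc ` {g \<in> fixed_points t. p \<le> g}"
proof (rule set_eqI)
  fix g
  show "g \<in> {g \<in> fixed_points (insert_fixed t p). p < g}
    \<longleftrightarrow> g \<in> Suc ` {g \<in> fixed_points t. p \<le> g}"
  proof (cases "p < g \<and> g \<le> Suc (length t)")
    case True
    then obtain i where i: "g = Suc i" "p \<le> i" "i \<le> length t" by (cases g) auto
    then have "insert_fixed t p ! i = shift_up p (t ! (i - 1))"
      using p by (simp add: nth_insert_fixed)
    moreover have "shift_up p (t ! (i - 1)) = Suc i \<longleftrightarrow> t ! (i - 1) = i"
      using i by (auto simp: shift_up_def)
    ultimately show ?thesis using i p by (auto simp: fixed_points_def)
  next
    case False
    then show ?thesis using p by (auto simp: fixed_points_def)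
  qed
qed

lemma reduction_perms: "s \<in> perms n \<Longrightarrow> reduction s = s"
proof -
  assume "s \<in> perms n"
  then have "{y \<in> set s. y \<le> x} = {1..x}" if "x \<in> set s" for x
    using that by (auto simp: perms_def)
  then show ?thesis by (simp add: reduction_def map_idI)
qed

lemma dp_derangement: "s \<in> perms n \<Longrightarrow> fixed_points s = {} \<Longrightarrow> dp s = s"
proof -
  assume s: "s \<in> perms n" and "fixed_points s = {}"
  then have "filter (\<lambda>i. s ! i \<noteq> Suc i) [0..<length s] = [0..<length s]"
    by (auto simp: fixed_points_eq_image filter_id_conv)
  then show ?thesis using reduction_perms[OF s] by (simp add: dp_eq map_nth)
qed

lemma derangements_iff: "s \<in> derangements k \<longleftrightarrow> s \<in> perms k \<and> fixed_points s = {}"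
  by (auto simp: derangements_def perms_def fixed_points_eq_image)

section \<open>Inversions\<close>

definition inversion_pairs :: "nat list \<Rightarrow> (nat \<times> nat) set" where
  "inversion_pairs xs = {(i, j). i < j \<and> j < length xs \<and> xs ! i > xs ! j}"

lemma finite_inversion_pairs: "finite (inversion_pairs xs)"
  by (rule finite_subset[of _ "{..<length xs} \<times> {..<length xs}"]) (auto simp: inversion_pairs_def)

lemma inversion_pairs_insert_fixed_subset:
  assumes m: "m \<le> length t"
  shows "inversion_pairs (insert_fixed t (Suc m))
    \<subseteq> (\<lambda>(i, j). (shift_up m i, shift_up m j)) ` inversion_pairs t
      \<union> (\<lambda>i. (i, m)) ` {i. i < m \<and> m < t ! i}
      \<union> (\<lambda>j. (m, Suc j)) ` {j. m \<le> j \<and> j < length t \<and> t ! j \<le> m}"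
    (is "inversion_pairs ?u \<subseteq> ?I \<union> ?L \<union> ?R")
proof
  have p: "1 \<le> Suc m" "Suc m \<le> Suc (length t)" using m by simp_all
  have u_m: "?u ! m = Suc m" using nth_insert_fixed_fixed[OF p] by simp
  have u_shift: "?u ! shift_up m i = shift_up (Suc m) (t ! i)" if "i < length t" for i
    using nth_insert_fixed_shift_up[OF p that] by simp
  fix x assume "x \<in> inversion_pairs ?u"
  then obtain i j where ij: "x = (i, j)" "i < j" "j < Suc (length t)" "?u ! j < ?u ! i"
    using m by (auto simp: inversion_pairs_def)
  consider "i = m" | "j = m" | "i \<noteq> m" "j \<noteq> m" by blast
  then show "x \<in> ?I \<union> ?L \<union> ?R"
  proof cases
    case 1
    then obtain j' where "j = Suc j'" "m \<le> j'" using ij by (cases j) auto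
    moreover have "j = shift_up m j'" using \<open>m \<le> j'\<close> \<open>j = Suc j'\<close> by (simp add: shift_up_def)
    ultimately show ?thesis using ij 1 u_m u_shift[of j'] by (auto simp: shift_up_def split: if_splits)
  next
    case 2
    then have "i = shift_up m i" "i < length t" using ij m by (auto simp: shift_up_def)
    then show ?thesis using ij 2 u_m u_shift[of i] by (auto simp: shift_up_def split: if_splits)
  next
    case 3
    define i' j' where "i' = shift_down m i" and "j' = shift_down m j"
    have ij': "i = shift_up m i'" "j = shift_up m j'" "i' < length t" "j' < length t"
      using 3 ij m shift_up_shift_down by (auto simp: i'_def j'_def shift_down_def)
    then have "(i', j') \<in> inversion_pairs t"
      using ij u_shift by (auto simp: inversion_pairs_def)
    then show ?thesis using ij ij' by force
  qed
qed

lemma inversion_pairs_insert_fixed_supset: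
  assumes m: "m \<le> length t"
  shows "(\<lambda>(i, j). (shift_up m i, shift_up m j)) ` inversion_pairs t
      \<union> (\<lambda>i. (i, m)) ` {i. i < m \<and> m < t ! i}
      \<union> (\<lambda>j. (m, Suc j)) ` {j. m \<le> j \<and> j < length t \<and> t ! j \<le> m}
    \<subseteq> inversion_pairs (insert_fixed t (Suc m))"
    (is "?I \<union> ?L \<union> ?R \<subseteq> inversion_pairs ?u")
proof
  have p: "1 \<le> Suc m" "Suc m \<le> Suc (length t)" using m by simp_all
  have len: "length ?u = Suc (length t)" using m by simp
  have u_m: "?u ! m = Suc m" using nth_insert_fixed_fixed[OF p] by simp
  have u_shift: "?u ! shift_up m i = shift_up (Suc m) (t ! i)" if "i < length t" for i
    using nth_insert_fixed_shift_up[OF p that] by simp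
  have shift_lt: "shift_up m i < Suc (length t) \<longleftrightarrow> i < length t" for i
    using m by (auto simp: shift_up_def)
  fix x assume "x \<in> ?I \<union> ?L \<union> ?R"
  then consider (I) i j where "x = (shift_up m i, shift_up m j)" "(i, j) \<in> inversion_pairs t"
    | (L) i where "x = (i, m)" "i < m" "m < t ! i"
    | (R) j where "x = (m, Suc j)" "m \<le> j" "j < length t" "t ! j \<le> m"
    by auto
  then show "x \<in> inversion_pairs ?u"
  proof cases
    case I then show ?thesis using u_shift shift_lt by (auto simp: inversion_pairs_def len)
  next
    case L
    then have "i = shift_up m i" "i < length t" using m by (auto simp: shift_up_def)
    then show ?thesis using L m u_m u_shift[of i] len by (auto simp: inversion_pairs_def shift_up_def)
  next
    case R
    then have "Suc j = shift_up m j" by (simp add: shift_up_def)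
    then show ?thesis using R u_m u_shift[of j] len by (auto simp: inversion_pairs_def shift_up_def)
  qed
qed

lemma inversions_insert_fixed:
  assumes m: "m \<le> length t"
  shows "inversions (insert_fixed t (Suc m))
    = inversions t + card {i. i < m \<and> m < t ! i} + card {j. m \<le> j \<and> j < length t \<and> t ! j \<le> m}"
proof -
  let ?I = "(\<lambda>(i, j). (shift_up m i, shift_up m j)) ` inversion_pairs t"
  let ?L = "(\<lambda>i. (i, m)) ` {i. i < m \<and> m < t ! i}"
  let ?R = "(\<lambda>j. (m, Suc j)) ` {j. m \<le> j \<and> j < length t \<and> t ! j \<le> m}"
  have "inj_on (\<lambda>(i, j). (shift_up m i, shift_up m j)) (inversion_pairs t)"
    by (auto simp: inj_on_def)
  then have "card ?I = inversions t"
    by (simp add: card_image inversions_def inversion_pairs_def)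
  moreover have "card ?L = card {i. i < m \<and> m < t ! i}" and "card ?R = card {j. m \<le> j \<and> j < length t \<and> t ! j \<le> m}"
    by (simp_all add: card_image inj_on_def)
  moreover have "?I \<inter> ?L = {}" and "(?I \<union> ?L) \<inter> ?R = {}"
    by (auto simp: shift_up_def split: if_splits)
  moreover have "finite ?I" "finite ?L" "finite ?R"
    using finite_inversion_pairs[of t] by auto
  ultimately show ?thesis
    using inversion_pairs_insert_fixed_subset[OF m] inversion_pairs_insert_fixed_supset[OF m]
    by (simp add: inversions_def inversion_pairs_def[symmetric] card_Un_disjoint subset_antisym)
qed

text \<open>Both sides count m minus the number of letters at most m among the first m entries.\<close>
lemma card_large_before_eq_card_small_after:
  assumes t: "t \<in> perms N" and m: "m \<le> N"
  shows "card {i. i < m \<and> m < t ! i} = card {j. m \<le> j \<and> j < N \<and> t ! j \<le> m}"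
proof -
  define large_before where "large_before = {i. i < m \<and> m < t ! i}"
  define small_before where "small_before = {i. i < m \<and> t ! i \<le> m}"
  define small_after where "small_after = {j. m \<le> j \<and> j < N \<and> t ! j \<le> m}"
  have "nth t ` {j. j < N \<and> t ! j \<le> m} = {1..m}"
  proof
    show "nth t ` {j. j < N \<and> t ! j \<le> m} \<subseteq> {1..m}" using nth_perms_bounds[OF t] by auto
    show "{1..m} \<subseteq> nth t ` {j. j < N \<and> t ! j \<le> m}"
    proof
      fix v assume v: "v \<in> {1..m}"
      then have "v \<in> set t" using t m by (auto simp: perms_def)
      then obtain j where "j < N" "t ! j = v" using t by (auto simp: perms_def in_set_conv_nth)
      then show "v \<in> nth t ` {j. j < N \<and> t ! j \<le> m}" using v by force
    qed
  qed
  moreover have "inj_on (nth t) {j. j < N \<and> t ! j \<le> m}"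
    using nth_perms_eq_iff[OF t] by (auto simp: inj_on_def)
  ultimately have "card {j. j < N \<and> t ! j \<le> m} = m"
    by (metis card_image card_atLeastAtMost diff_Suc_1)
  moreover have "{j. j < N \<and> t ! j \<le> m} = small_before \<union> small_after"
    using m by (auto simp: small_before_def small_after_def)
  moreover have "{..<m} = small_before \<union> large_before"
    by (auto simp: small_before_def large_before_def)
  moreover have "finite small_before" "finite small_after" "finite large_before"
    "small_before \<inter> small_after = {}" "small_before \<inter> large_before = {}"
    by (auto simp: small_before_def small_after_def large_before_def)
  ultimately have "card small_before + card small_after = m" and "card small_before + card large_before = m"
    by (metis card_Un_disjoint card_lessThan)+
  then show ?thesis by (simp add: large_before_def small_after_def)
qed

lemma power_inversions_insert_fixed:
  assumes "t \<in> perms N" "1 \<le> p" "p \<le> Suc N"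
  shows "(-1 :: 'a :: ring_1) ^ inversions (insert_fixed t p) = (-1) ^ inversions t"
proof -
  obtain m where m: "p = Suc m" "m \<le> N" using assms by (cases p) auto
  have "length t = N" using assms by (simp add: perms_def)
  then have "inversions (insert_fixed t p) = inversions t + 2 * card {i. i < m \<and> m < t ! i}"
    using inversions_insert_fixed[of m t] card_large_before_eq_card_small_after[OF assms(1) m(2)] m
    by simp
  then show ?thesis by (simp add: power_add power_mult)
qed

section \<open>The major index\<close>

definition descent_weight :: "nat list \<Rightarrow> nat \<Rightarrow> nat" where
  "descent_weight xs i = (if i < length xs \<and> xs ! (i - 1) > xs ! i then i else 0)"

definition descents_from :: "nat list \<Rightarrow> nat \<Rightarrow> nat" where
  "descents_from t p = card {i. p \<le> i \<and> i < length t \<and> t ! (i - 1) > t ! i}"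

lemma descent_weight_0 [simp]: "descent_weight xs 0 = 0"
  by (simp add: descent_weight_def)

lemma maj_eq_sum_descent_weight: "maj xs = (\<Sum>i\<le>length xs. descent_weight xs i)"
proof -
  have "maj xs = (\<Sum>i<length xs. if Suc i < length xs \<and> xs ! i > xs ! Suc i then Suc i else 0)"
    unfolding maj_def by (rule sum.mono_neutral_cong_left) auto
  also have "\<dots> = (\<Sum>i<length xs. descent_weight xs (Suc i))" by (simp add: descent_weight_def)
  also have "\<dots> = (\<Sum>i\<le>length xs. descent_weight xs i)"
    by (subst lessThan_Suc_atMost[symmetric]) (simp only: sum.lessThan_Suc_shift descent_weight_0 add_0)
  finally show ?thesis .
qed

lemma descent_weight_insert_fixed_below:
  assumes "m \<le> length t" "i < m"
  shows "descent_weight (insert_fixed t (Suc m)) i = descent_weight t i"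
  using assms by (cases i) (auto simp: descent_weight_def nth_insert_fixed_Suc)

lemma sum_descent_weight_insert_fixed_above:
  assumes m: "m \<le> length t"
  shows "(\<Sum>i\<in>{Suc (Suc m)..Suc (length t)}. descent_weight (insert_fixed t (Suc m)) i)
    = (\<Sum>j\<in>{Suc m..length t}. descent_weight t j) + descents_from t (Suc m)"
proof -
  let ?desc = "\<lambda>j. j < length t \<and> t ! (j - 1) > t ! j"
  have "(\<Sum>i\<in>{Suc (Suc m)..Suc (length t)}. descent_weight (insert_fixed t (Suc m)) i)
      = (\<Sum>j\<in>{Suc m..length t}. descent_weight (insert_fixed t (Suc m)) (Suc j))"
    by (rule sum.shift_bounds_cl_Suc_ivl)
  also have "\<dots> = (\<Sum>j\<in>{Suc m..length t}. descent_weight t j + (if ?desc j then 1 else 0))"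
    using m by (intro sum.cong) (auto simp: descent_weight_def nth_insert_fixed_Suc)
  also have "\<dots> = (\<Sum>j\<in>{Suc m..length t}. descent_weight t j) + card {j \<in> {Suc m..length t}. ?desc j}"
    by (simp add: sum.distrib sum.If_cases Int_def)
  also have "{j \<in> {Suc m..length t}. ?desc j} = {i. Suc m \<le> i \<and> ?desc i}"
    by auto
  finally show ?thesis by (simp add: descents_from_def)
qed

text \<open>The slots at which inserting p between a = t ! (p - 2) and b = t ! (p - 1) increases the
  number of descents.\<close>
definition major_slot :: "nat list \<Rightarrow> nat \<Rightarrow> bool" where
  "major_slot t p \<longleftrightarrow> 2 \<le> p \<and> p \<le> length t \<and>
     ((p \<le> t ! (p - 2) \<and> t ! (p - 1) < p) \<or>
      (t ! (p - 2) < t ! (p - 1) \<and> (p \<le> t ! (p - 2) \<longleftrightarrow> p \<le> t ! (p - 1))))"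

lemma descent_weight_insert_fixed_slot:
  assumes t: "t \<in> perms N" and m: "m \<le> N"
  shows "descent_weight (insert_fixed t (Suc m)) m + descent_weight (insert_fixed t (Suc m)) (Suc m)
    = descent_weight t m + (if m < N \<and> t ! m \<le> m then 1 else 0) + (if major_slot t (Suc m) then m else 0)"
proof -
  let ?u = "insert_fixed t (Suc m)"
  have len: "length t = N" using t by (simp add: perms_def)
  consider "m = 0" | "0 < m" "m = N" | "0 < m" "m < N" using m by linarith
  then show ?thesis
  proof cases
    case 1
    have "N \<noteq> 0 \<Longrightarrow> 1 \<le> t ! 0" using nth_perms_bounds[OF t, of 0] by simp
    then show ?thesis using 1 len by (auto simp: descent_weight_def nth_insert_fixed_Suc major_slot_def shift_up_def)
  next
    case 2
    have "t ! (N - 1) \<le> N" using nth_perms_bounds[OF t, of "N - 1"] 2 by simp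
    then show ?thesis using 2 len by (auto simp: descent_weight_def nth_insert_fixed_Suc major_slot_def shift_up_def)
  next
    case 3
    define a b where "a = t ! (m - 1)" and "b = t ! m"
    have "a \<noteq> b" using nth_perms_eq_iff[OF t, of "m - 1" m] 3 by (simp add: a_def b_def)
    moreover have "descent_weight ?u m = (if Suc m \<le> a then m else 0)"
      using 3 len by (auto simp: descent_weight_def nth_insert_fixed_Suc a_def shift_up_def)
    moreover have "descent_weight ?u (Suc m) = (if b < Suc m then Suc m else 0)"
      using 3 len by (auto simp: descent_weight_def nth_insert_fixed_Suc b_def shift_up_def)
    moreover have "descent_weight t m = (if b < a then m else 0)"
      using 3 len by (simp add: descent_weight_def a_def b_def)
    moreover have "major_slot t (Suc m) \<longleftrightarrow>
        (Suc m \<le> a \<and> b < Suc m) \<or> (a < b \<and> (Suc m \<le> a \<longleftrightarrow> Suc m \<le> b))"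
      using 3 len by (simp add: major_slot_def a_def b_def)
    ultimately show ?thesis using 3 by (simp add: b_def[symmetric])
  qed
qed

lemma maj_insert_fixed:
  assumes t: "t \<in> perms N" and m: "m \<le> N"
  shows "maj (insert_fixed t (Suc m)) = maj t + descents_from t (Suc m)
    + (if m < N \<and> t ! m \<le> m then 1 else 0) + (if major_slot t (Suc m) then m else 0)"
proof -
  let ?u = "insert_fixed t (Suc m)"
  have len: "length t = N" using t by (simp add: perms_def)
  have "maj ?u = (\<Sum>i<m. descent_weight ?u i) + descent_weight ?u m + descent_weight ?u (Suc m)
      + (\<Sum>i\<in>{Suc (Suc m)..Suc N}. descent_weight ?u i)"
  proof -
    have "(\<Sum>i\<in>{Suc m..Suc N}. descent_weight ?u i)
        = descent_weight ?u (Suc m) + (\<Sum>i\<in>{Suc (Suc m)..Suc N}. descent_weight ?u i)"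
      using m by (intro sum.atLeast_Suc_atMost) simp
    then show ?thesis using m len by (simp add: maj_eq_sum_descent_weight sum_atMost_split[of m] add.assoc)
  qed
  moreover have "maj t = (\<Sum>i<m. descent_weight t i) + descent_weight t m
      + (\<Sum>i\<in>{Suc m..N}. descent_weight t i)"
    using m len by (simp add: maj_eq_sum_descent_weight sum_atMost_split[of m])
  moreover have "(\<Sum>i<m. descent_weight ?u i) = (\<Sum>i<m. descent_weight t i)"
    using m len by (intro sum.cong) (simp_all add: descent_weight_insert_fixed_below)
  ultimately show ?thesis
    using descent_weight_insert_fixed_slot[OF t m] sum_descent_weight_insert_fixed_above[of m t] m len
    by simp
qed

lemma descents_from_Suc:
  "descents_from t p = descents_from t (Suc p) + (if p < length t \<and> t ! (p - 1) > t ! p then 1 else 0)"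
  unfolding descents_from_def by (rule card_atLeast_Suc) simp

lemma card_fixed_points_atLeast_Suc:
  "card {g \<in> fixed_points t. p \<le> g} = card {g \<in> fixed_points t. Suc p \<le> g} + (if p \<in> fixed_points t then 1 else 0)"
proof -
  have "{g \<in> fixed_points t. q \<le> g} = {g. q \<le> g \<and> g \<in> fixed_points t}" for q by auto
  then show ?thesis using card_atLeast_Suc[of "\<lambda>g. g \<in> fixed_points t" p] finite_fixed_points[of t] by simp
qed

text \<open>The increase of maj caused by inserting at slot p, plus the number of fixed points at
  positions \<ge> p, minus the term p - 1 of a major slot.\<close>
definition slot_rank :: "nat list \<Rightarrow> nat \<Rightarrow> nat" where
  "slot_rank t p = descents_from t p + card {g \<in> fixed_points t. p \<le> g}
     + (if p \<le> length t \<and> t ! (p - 1) < p then 1 else 0)"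

lemma slot_rank_Suc:
  assumes t: "t \<in> perms N" and p: "1 \<le> p" "p \<le> N"
  shows "slot_rank t p = slot_rank t (Suc p) + (if major_slot t (Suc p) then 0 else 1)"
proof -
  have len: "length t = N" using t by (simp add: perms_def)
  define a where "a = t ! (p - 1)"
  have a: "1 \<le> a" "a \<le> N" using nth_perms_bounds[OF t, of "p - 1"] p by (auto simp: a_def)
  have fixed_Suc: "card {g \<in> fixed_points t. p \<le> g}
      = card {g \<in> fixed_points t. Suc p \<le> g} + (if a = p then 1 else 0)"
  proof -
    have "p \<in> fixed_points t \<longleftrightarrow> a = p" using p len by (auto simp: fixed_points_def a_def)
    then show ?thesis using card_fixed_points_atLeast_Suc[of t p] by simp
  qed
  show ?thesis
  proof (cases "p = N")
    case True
    then have "descents_from t p = 0" "descents_from t (Suc p) = 0" "slot_rank t (Suc p) = 0"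
      "card {g \<in> fixed_points t. Suc p \<le> g} = 0" "\<not> major_slot t (Suc p)"
      using len by (auto simp: descents_from_def slot_rank_def major_slot_def fixed_points_def)
    then show ?thesis using True fixed_Suc a len by (simp add: slot_rank_def a_def)
  next
    case False
    define b where "b = t ! p"
    have "a \<noteq> b" using nth_perms_eq_iff[OF t, of "p - 1" p] p False by (simp add: a_def b_def)
    moreover have "major_slot t (Suc p) \<longleftrightarrow>
        (Suc p \<le> a \<and> b < Suc p) \<or> (a < b \<and> (Suc p \<le> a \<longleftrightarrow> Suc p \<le> b))"
      using p False len by (simp add: major_slot_def a_def b_def)
    ultimately have "(if b < a then 1 else 0) + (if a = p then 1 else 0) + (if a < p then 1 else 0)
        = (if b < Suc p then 1 else 0) + (if major_slot t (Suc p) then 0 else 1 :: nat)"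
      by (cases "a < b"; cases "a \<le> p"; cases "b \<le> p"; cases "a = p") auto
    moreover have "slot_rank t p = descents_from t (Suc p) + (if b < a then 1 else 0)
        + card {g \<in> fixed_points t. Suc p \<le> g} + (if a = p then 1 else 0) + (if a < p then 1 else 0)"
      using fixed_Suc p False len by (simp add: slot_rank_def descents_from_Suc[of t p] a_def b_def)
    moreover have "slot_rank t (Suc p) = descents_from t (Suc p) + card {g \<in> fixed_points t. Suc p \<le> g}
        + (if b < Suc p then 1 else 0)"
      using p False len by (simp add: slot_rank_def b_def)
    ultimately show ?thesis by simp
  qed
qed

lemma slot_rank_eq_card:
  assumes t: "t \<in> perms N" and p: "p \<in> {1..Suc N}"
  shows "slot_rank t p = card {x \<in> {p<..Suc N}. \<not> major_slot t x}"
  using p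
proof (induction "Suc N - p" arbitrary: p)
  case 0
  then have "p = Suc N" by simp
  moreover have "card {g \<in> fixed_points t. Suc N \<le> g} = 0"
    using t by (auto simp: fixed_points_def perms_def card_eq_0_iff)
  ultimately show ?case using t by (simp add: slot_rank_def descents_from_def perms_def)
next
  case (Suc d)
  then have p: "1 \<le> p" "p \<le> N" by auto
  have "{x \<in> {q<..Suc N}. \<not> major_slot t x} = {x. Suc q \<le> x \<and> x \<le> Suc N \<and> \<not> major_slot t x}" for q
    by auto
  then have "card {x \<in> {p<..Suc N}. \<not> major_slot t x}
      = card {x \<in> {Suc p<..Suc N}. \<not> major_slot t x} + (if major_slot t (Suc p) then 0 else 1)"
    using p card_atLeast_Suc[of "\<lambda>x. x \<le> Suc N \<and> \<not> major_slot t x" "Suc p"] by simp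
  moreover have "slot_rank t (Suc p) = card {x \<in> {Suc p<..Suc N}. \<not> major_slot t x}"
    using Suc.hyps(1)[of "Suc p"] Suc.hyps(2) p by simp
  ultimately show ?case using slot_rank_Suc[OF t p] by simp
qed

lemma sum_power_maj_insert_fixed:
  fixes q :: "'a::comm_semiring_1"
  assumes t: "t \<in> perms N"
  shows "(\<Sum>p\<in>{1..Suc N}. q ^ (maj (insert_fixed t p) + card {g \<in> fixed_points t. p \<le> g}))
    = q ^ maj t * (\<Sum>i<Suc N. q ^ i)"
proof -
  have "maj (insert_fixed t p) + card {g \<in> fixed_points t. p \<le> g}
      = maj t + (slot_rank t p + (if major_slot t p then p - 1 else 0))" if p: "p \<in> {1..Suc N}" for p
  proof -
    obtain m where m: "p = Suc m" "m \<le> N" using p by (cases p) auto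
    then show ?thesis using maj_insert_fixed[OF t m(2)] t by (simp add: slot_rank_def perms_def)
  qed
  then have "(\<Sum>p\<in>{1..Suc N}. q ^ (maj (insert_fixed t p) + card {g \<in> fixed_points t. p \<le> g}))
      = (\<Sum>p\<in>{1..Suc N}. q ^ maj t * q ^ (slot_rank t p + (if major_slot t p then p - 1 else 0)))"
    by (intro sum.cong refl) (simp only: power_add)
  also have "\<dots> = q ^ maj t * (\<Sum>p\<in>{1..Suc N}. q ^ (slot_rank t p + (if major_slot t p then p - 1 else 0)))"
    by (rule sum_distrib_left[symmetric])
  also have "\<dots> = q ^ maj t * (\<Sum>i<Suc N. q ^ i)"
    using sum_power_slots[of "Suc N" "slot_rank t" "major_slot t" q] slot_rank_eq_card[OF t] by simp
  finally show ?thesis .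
qed

section \<open>The recursion along the fibres of dp\<close>

definition dp_fibre :: "nat \<Rightarrow> nat list \<Rightarrow> nat list set" where
  "dp_fibre n \<sigma> = {\<pi> \<in> perms n. dp \<pi> = \<sigma>}"

definition signed_maj :: "nat list \<Rightarrow> int poly" where
  "signed_maj \<pi> = (-1) ^ inversions \<pi> * qvar ^ maj \<pi>"

lemma finite_dp_fibre: "finite (dp_fibre n \<sigma>)"
  using finite_perms by (simp add: dp_fibre_def)

lemma card_fixed_points_dp_fibre: "\<pi> \<in> dp_fibre n \<sigma> \<Longrightarrow> card (fixed_points \<pi>) = n - length \<sigma>"
  using card_fixed_points_add_length_dp[of \<pi>] by (auto simp: dp_fibre_def perms_def)

lemma dp_fibre_derangement: "\<sigma> \<in> derangements k \<Longrightarrow> dp_fibre k \<sigma> = {\<sigma>}"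
proof
  assume \<sigma>: "\<sigma> \<in> derangements k"
  then show "{\<sigma>} \<subseteq> dp_fibre k \<sigma>" using dp_derangement by (auto simp: derangements_iff dp_fibre_def)
  show "dp_fibre k \<sigma> \<subseteq> {\<sigma>}"
  proof
    fix \<pi> assume \<pi>: "\<pi> \<in> dp_fibre k \<sigma>"
    have "length \<sigma> = k" using \<sigma> by (simp add: derangements_iff perms_def)
    then have "fixed_points \<pi> = {}"
      using card_fixed_points_dp_fibre[OF \<pi>] finite_fixed_points[of \<pi>] by simp
    then show "\<pi> \<in> {\<sigma>}" using \<pi> dp_derangement by (auto simp: dp_fibre_def)
  qed
qed

lemma bij_betw_insert_fixed_dp_fibre:
  "bij_betw (\<lambda>(\<tau>, p). (insert_fixed \<tau> p, p)) (dp_fibre N \<sigma> \<times> {1..Suc N})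
     (SIGMA \<pi>:dp_fibre (Suc N) \<sigma>. fixed_points \<pi>)"
  (is "bij_betw ?ins ?A ?B")
proof (rule bij_betw_byWitness[where f' = "\<lambda>(\<pi>, f). (delete_fixed \<pi> f, f)"])
  let ?del = "\<lambda>(\<pi>, f). (delete_fixed \<pi> f, f)"
  show "\<forall>x\<in>?A. ?del (?ins x) = x"
    by (auto simp: dp_fibre_def perms_def delete_insert_fixed)
  show "\<forall>y\<in>?B. ?ins (?del y) = y"
    by (auto simp: dp_fibre_def fixed_points_def intro!: insert_delete_fixed perms_imp_distinct)
  show "?ins ` ?A \<subseteq> ?B"
  proof (rule image_subsetI)
    fix x assume "x \<in> ?A"
    then obtain \<tau> p where x: "x = (\<tau>, p)" "\<tau> \<in> dp_fibre N \<sigma>" "p \<in> {1..Suc N}" by blast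
    then have "\<tau> \<in> perms N" "dp \<tau> = \<sigma>" "length \<tau> = N" "1 \<le> p" "p \<le> Suc N"
      by (auto simp: dp_fibre_def perms_def)
    then show "?ins x \<in> ?B"
      by (simp add: x dp_fibre_def insert_fixed_in_perms dp_insert_fixed fixed_in_fixed_points_insert_fixed)
  qed
  show "?del ` ?B \<subseteq> ?A"
  proof (rule image_subsetI)
    fix y assume "y \<in> ?B"
    then obtain \<pi> f where y: "y = (\<pi>, f)" and \<pi>: "\<pi> \<in> dp_fibre (Suc N) \<sigma>" and f: "f \<in> fixed_points \<pi>"
      by blast
    have \<pi>_perm: "\<pi> \<in> perms (Suc N)" and "dp \<pi> = \<sigma>" using \<pi> by (auto simp: dp_fibre_def)
    have f': "1 \<le> f" "f \<le> Suc N" "\<pi> ! (f - 1) = f" using f \<pi>_perm by (auto simp: fixed_points_def perms_def)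
    have d: "delete_fixed \<pi> f \<in> perms N" by (rule delete_fixed_in_perms[OF \<pi>_perm f'])
    have "insert_fixed (delete_fixed \<pi> f) f = \<pi>"
      using insert_delete_fixed[OF perms_imp_distinct[OF \<pi>_perm]] f' \<pi>_perm by (simp add: perms_def)
    then have "dp (delete_fixed \<pi> f) = \<sigma>"
      using dp_insert_fixed[of f "delete_fixed \<pi> f"] d f' \<open>dp \<pi> = \<sigma>\<close> by (simp add: perms_def)
    then show "?del y \<in> ?A" using d f' by (simp add: y dp_fibre_def)
  qed
qed

lemma qint_card_eq_sum:
  fixes F :: "'a::linorder set"
  shows "finite F \<Longrightarrow> qint (card F) = (\<Sum>f\<in>F. qvar ^ card {g \<in> F. f < g})"
  using sum_card_greater_eq_sum_lessThan[of F "\<lambda>i. qvar ^ i"] by (simp add: qint_def)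

lemma signed_maj_insert_fixed:
  assumes "\<tau> \<in> perms N" "p \<in> {1..Suc N}"
  shows "qvar ^ card {g \<in> fixed_points (insert_fixed \<tau> p). p < g} * signed_maj (insert_fixed \<tau> p)
    = (-1) ^ inversions \<tau> * qvar ^ (maj (insert_fixed \<tau> p) + card {g \<in> fixed_points \<tau>. p \<le> g})"
proof -
  have "length \<tau> = N" using assms by (simp add: perms_def)
  then have "card {g \<in> fixed_points (insert_fixed \<tau> p). p < g} = card {g \<in> fixed_points \<tau>. p \<le> g}"
    using assms by (simp add: fixed_points_insert_fixed_greater card_image)
  then show ?thesis
    using power_inversions_insert_fixed[where 'a = "int poly", of \<tau> N p] assms by (simp add: signed_maj_def power_add ac_simps)
qed

lemma sum_signed_maj_insert_fixed:
  assumes "\<tau> \<in> perms N"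
  shows "(\<Sum>p\<in>{1..Suc N}. qvar ^ card {g \<in> fixed_points (insert_fixed \<tau> p). p < g} * signed_maj (insert_fixed \<tau> p))
    = qint (Suc N) * signed_maj \<tau>"
proof -
  have "(\<Sum>p\<in>{1..Suc N}. qvar ^ card {g \<in> fixed_points (insert_fixed \<tau> p). p < g} * signed_maj (insert_fixed \<tau> p))
      = (-1) ^ inversions \<tau> * (\<Sum>p\<in>{1..Suc N}. qvar ^ (maj (insert_fixed \<tau> p) + card {g \<in> fixed_points \<tau>. p \<le> g}))"
    unfolding sum_distrib_left using assms by (intro sum.cong refl signed_maj_insert_fixed)
  also have "\<dots> = qint (Suc N) * signed_maj \<tau>"
    using sum_power_maj_insert_fixed[OF assms, of qvar] by (simp add: qint_def signed_maj_def ac_simps)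
  finally show ?thesis .
qed

lemma sum_dp_fibre_Suc:
  assumes "length \<sigma> \<le> N"
  shows "qint (Suc N - length \<sigma>) * (\<Sum>\<pi>\<in>dp_fibre (Suc N) \<sigma>. signed_maj \<pi>)
    = qint (Suc N) * (\<Sum>\<tau>\<in>dp_fibre N \<sigma>. signed_maj \<tau>)"
proof -
  let ?w = "\<lambda>\<pi> f. qvar ^ card {g \<in> fixed_points \<pi>. f < g} * signed_maj \<pi>"
  have "qint (Suc N - length \<sigma>) * (\<Sum>\<pi>\<in>dp_fibre (Suc N) \<sigma>. signed_maj \<pi>)
      = (\<Sum>\<pi>\<in>dp_fibre (Suc N) \<sigma>. \<Sum>f\<in>fixed_points \<pi>. ?w \<pi> f)"
    unfolding sum_distrib_left
    by (intro sum.cong refl)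
       (simp add: card_fixed_points_dp_fibre[symmetric] qint_card_eq_sum finite_fixed_points sum_distrib_right)
  also have "\<dots> = (\<Sum>(\<pi>, f)\<in>(SIGMA \<pi>:dp_fibre (Suc N) \<sigma>. fixed_points \<pi>). ?w \<pi> f)"
    by (rule sum.Sigma) (simp_all add: finite_dp_fibre finite_fixed_points)
  also have "\<dots> = (\<Sum>(\<tau>, p)\<in>dp_fibre N \<sigma> \<times> {1..Suc N}. ?w (insert_fixed \<tau> p) p)"
    by (subst sum.reindex_bij_betw[OF bij_betw_insert_fixed_dp_fibre, symmetric]) (simp add: case_prod_beta)
  also have "\<dots> = (\<Sum>\<tau>\<in>dp_fibre N \<sigma>. \<Sum>p\<in>{1..Suc N}. ?w (insert_fixed \<tau> p) p)"
    by (rule sum.cartesian_product[symmetric])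
  also have "\<dots> = (\<Sum>\<tau>\<in>dp_fibre N \<sigma>. qint (Suc N) * signed_maj \<tau>)"
    by (intro sum.cong refl sum_signed_maj_insert_fixed) (simp add: dp_fibre_def)
  finally show ?thesis by (simp add: sum_distrib_left)
qed

lemma sum_dp_fibre_mult_qfact:
  assumes \<sigma>: "\<sigma> \<in> derangements k" and "k \<le> n"
  shows "(\<Sum>\<pi>\<in>dp_fibre n \<sigma>. signed_maj \<pi>) * qfact k * qfact (n - k) = signed_maj \<sigma> * qfact n"
  using \<open>k \<le> n\<close>
proof (induction n)
  case 0 then show ?case using dp_fibre_derangement[OF \<sigma>] by (simp add: qfact_def)
next
  case (Suc N)
  have k: "length \<sigma> = k" using \<sigma> by (simp add: derangements_iff perms_def)
  show ?case
  proof (cases "k = Suc N")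
    case True then show ?thesis using dp_fibre_derangement[OF \<sigma>] by (simp add: qfact_def)
  next
    case False
    then have kN: "k \<le> N" using Suc.prems by simp
    have "qfact (Suc N - k) = qint (Suc N - k) * qfact (N - k)"
      using kN qfact_Suc[of "N - k"] by (simp add: Suc_diff_le)
    then have "(\<Sum>\<pi>\<in>dp_fibre (Suc N) \<sigma>. signed_maj \<pi>) * qfact k * qfact (Suc N - k)
        = qint (Suc N) * ((\<Sum>\<tau>\<in>dp_fibre N \<sigma>. signed_maj \<tau>) * qfact k * qfact (N - k))"
      using sum_dp_fibre_Suc[of \<sigma> N] k kN by (simp only: ac_simps)
    also have "\<dots> = signed_maj \<sigma> * qfact (Suc N)"
      using Suc.IH kN by (simp add: qfact_Suc ac_simps)
    finally show ?thesis .
  qed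
qed

theorem proposition2p6:
  fixes n k :: nat and \<sigma> :: "nat list"
  assumes "k \<le> n" and "\<sigma> \<in> derangements k"
  shows "(\<Sum>\<pi> \<in> {\<pi> \<in> perms n. dp \<pi> = \<sigma>}. (-1) ^ inversions \<pi> * qvar ^ maj \<pi>)
         = (-1) ^ inversions \<sigma> * qvar ^ maj \<sigma> * qbinom n k"
  using eq_qbinom_if_mult_qfact[OF assms(1) sum_dp_fibre_mult_qfact[OF assms(2,1)]]
  by (simp add: dp_fibre_def signed_maj_def)

end
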